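(* Let $n$ and $m$ be positive integers and $0<\theta\le 1$, and put $\phi = m(1-\theta)/\theta$. Then for every $x\in\{0,1,\dots,n\}$, $$\binom{n}{x}\theta^x(1-\theta)^{n-x} = \sum_{k=0}^{x}\mathrm{Spillage}(x-k\mid n,k,\phi)\cdot \mathrm{Occ}(k\mid n,m,\theta).$$
   Context: $S(j,k)$ denotes the (central) Stirling numbers of the second kind and $(m)_k = m(m-1)\cdots(m-k+1)$ the falling factorial. The noncentral Stirling numbers of the second kind are $S(n,k,\phi) = \sum_{r=0}^{n-k}\binom{n}{k+r}\phi^{n-k-r}S(k+r,k)$. The spillage mass function, for $0\le k\le n$ and $0<\phi<\infty$, is $\mathrm{Spillage}(r\mid n,k,\phi) = \binom{n}{k+r}\phi^{n-k-r}S(k+r,k)/S(n,k,\phi)$ for $r=0,\dots,n-k$; for $\phi=0$ it is by convention the point mass $\mathrm{Spillage}(r\mid n,k,0)=\mathbb{I}(r=n-k)$. The (extended) occupancy mass function is $\mathrm{Occ}(k\mid n,m,\theta) = \frac{\theta^n}{m^n}(m)_k\,S\!\left(n,k,m\frac{1-\theta}{\theta}\right)$ for $k=0,\dots,n$ (for $\theta=1$ this reads $(m)_kS(n,k)/m^n$). *)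

theory Defs
  imports "HOL-Analysis.Analysis" "HOL-Combinatorics.Stirling"
begin

definition falling_fact :: "real \<Rightarrow> nat \<Rightarrow> real" where
  "falling_fact m k = (\<Prod>i<k. m - real i)"

definition ncStirling :: "nat \<Rightarrow> nat \<Rightarrow> real \<Rightarrow> real" where
  "ncStirling n k \<phi> =
     (\<Sum>r\<in>{0..n-k}. real (n choose (k + r)) * \<phi> ^ (n - k - r) * real (Stirling (k + r) k))"

definition spillage :: "nat \<Rightarrow> nat \<Rightarrow> nat \<Rightarrow> real \<Rightarrow> real" where
  "spillage r n k \<phi> =
     (if \<phi> = 0 then (if r = n - k then 1 else 0)
      else real (n choose (k + r)) * \<phi> ^ (n - k - r) * real (Stirling (k + r) k) / ncStirling n k \<phi>)"

definition occ :: "nat \<Rightarrow> nat \<Rightarrow> nat \<Rightarrow> real \<Rightarrow> real" where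
  "occ k n m \<theta> =
     \<theta> ^ n / real m ^ n * falling_fact (real m) k * ncStirling n k (real m * (1 - \<theta>) / \<theta>)"

end

theory Submission
  imports Defs
begin

text \<open>Weighting the \<open>k\<close>-th term of the spillage distribution by the normaliser \<open>S(n,k,\<phi>)\<close> of
  the occupancy mass leaves \<open>C(n,x) \<phi>\<^sup>n\<^sup>-\<^sup>x S(x,k)\<close>, so the mixture collapses, via the classical
  expansion \<open>m\<^sup>x = \<Sum>\<^sub>k S(x,k) (m)\<^sub>k\<close>, to \<open>C(n,x) \<phi>\<^sup>n\<^sup>-\<^sup>x \<theta>\<^sup>n m\<^sup>x / m\<^sup>n\<close>, which is the binomial
  mass once \<open>\<phi> = m(1-\<theta>)/\<theta>\<close> is substituted.\<close>

lemma falling_fact_0: "falling_fact m 0 = 1"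
  by (simp add: falling_fact_def)

lemma falling_fact_Suc: "falling_fact m (Suc k) = falling_fact m k * (m - real k)"
  by (simp add: falling_fact_def)

lemma power_eq_sum_Stirling_falling_fact:
  "m ^ x = (\<Sum>k\<le>x. real (Stirling x k) * falling_fact m k)"
proof (induction x)
  case 0
  then show ?case by (simp add: falling_fact_0)
next
  case (Suc x)
  let ?S = "\<lambda>k. real (Stirling x k)" and ?f = "falling_fact m"
  have raise: "(\<Sum>k\<le>x. real (Suc k) * ?S (Suc k) * ?f (Suc k)) = (\<Sum>k\<le>x. real k * ?S k * ?f k)"
    using sum.atMost_Suc_shift[of "\<lambda>k. real k * ?S k * ?f k" x] by simp
  have keep: "(\<Sum>k\<le>x. ?S k * ?f (Suc k)) = m * (\<Sum>k\<le>x. ?S k * ?f k) - (\<Sum>k\<le>x. real k * ?S k * ?f k)"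
    by (simp add: falling_fact_Suc sum_distrib_left sum_subtractf[symmetric] algebra_simps)
  have "(\<Sum>k\<le>Suc x. real (Stirling (Suc x) k) * ?f k)
      = (\<Sum>k\<le>x. real (Stirling (Suc x) (Suc k)) * ?f (Suc k))"
    by (subst sum.atMost_Suc_shift) simp
  also have "\<dots> = (\<Sum>k\<le>x. real (Suc k) * ?S (Suc k) * ?f (Suc k)) + (\<Sum>k\<le>x. ?S k * ?f (Suc k))"
    by (simp add: sum.distrib algebra_simps)
  also have "\<dots> = m * (\<Sum>k\<le>x. ?S k * ?f k)"
    unfolding raise keep by simp
  finally show ?case using Suc by simp
qed

lemma ncStirling_0:
  assumes "k \<le> n"
  shows "ncStirling n k 0 = real (Stirling n k)"
proof -
  have "ncStirling n k 0 = (\<Sum>r\<in>{0..n-k}. if r = n - k then real (Stirling n k) else 0)"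
    unfolding ncStirling_def by (rule sum.cong) (use assms in auto)
  then show ?thesis by simp
qed

lemma ncStirling_term_le:
  assumes "0 \<le> \<phi>" and "k \<le> x" and "x \<le> n"
  shows "real (n choose x) * \<phi> ^ (n - x) * real (Stirling x k) \<le> ncStirling n k \<phi>"
proof -
  have "real (n choose x) * \<phi> ^ (n - x) * real (Stirling x k)
      = real (n choose (k + (x - k))) * \<phi> ^ (n - k - (x - k)) * real (Stirling (k + (x - k)) k)"
    using assms by simp
  also have "\<dots> \<le> ncStirling n k \<phi>"
    unfolding ncStirling_def by (rule member_le_sum) (use assms in auto)
  finally show ?thesis .
qed

lemma spillage_mult_ncStirling:
  assumes "0 \<le> \<phi>" and "k \<le> x" and "x \<le> n"
  shows "spillage (x - k) n k \<phi> * ncStirling n k \<phi> = real (n choose x) * \<phi> ^ (n - x) * real (Stirling x k)"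
proof (cases "\<phi> = 0")
  case True
  have "x - k = n - k \<longleftrightarrow> x = n" using assms by arith
  then show ?thesis using True assms by (simp add: spillage_def ncStirling_0)
next
  case False
  let ?T = "real (n choose x) * \<phi> ^ (n - x) * real (Stirling x k)"
  show ?thesis
  proof (cases "ncStirling n k \<phi> = 0")
    case True
    have "0 \<le> ?T" using assms by simp
    then have "?T = 0" using True ncStirling_term_le[OF assms] by linarith
    then show ?thesis using True by simp
  next
    case False
    then show ?thesis using \<open>\<phi> \<noteq> 0\<close> assms by (simp add: spillage_def)
  qed
qed

lemma binomial_weight_eq:
  fixes m :: real
  assumes "0 < m" and "0 < \<theta>" and "x \<le> n"
  shows "(m * (1 - \<theta>) / \<theta>) ^ (n - x) * (\<theta> ^ n / m ^ n) * m ^ x = \<theta> ^ x * (1 - \<theta>) ^ (n - x)"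
proof -
  obtain d where n: "n = x + d" using assms le_Suc_ex by blast
  show ?thesis
    using assms unfolding n power_add power_divide power_mult_distrib by (simp add: field_simps)
qed

theorem theorem4:
  fixes n m x :: nat and \<theta> :: real
  assumes "0 < n" and "0 < m" and "0 < \<theta>" and "\<theta> \<le> 1" and "x \<le> n"
  shows "real (n choose x) * \<theta> ^ x * (1 - \<theta>) ^ (n - x) =
         (\<Sum>k = 0..x. spillage (x - k) n k (real m * (1 - \<theta>) / \<theta>) * occ k n m \<theta>)"
proof -
  define \<phi> where "\<phi> = real m * (1 - \<theta>) / \<theta>"
  define c where "c = real (n choose x) * \<phi> ^ (n - x) * (\<theta> ^ n / real m ^ n)"
  have "0 \<le> \<phi>" using assms by (simp add: \<phi>_def)
  have "(\<Sum>k = 0..x. spillage (x - k) n k \<phi> * occ k n m \<theta>)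
      = (\<Sum>k\<le>x. c * (real (Stirling x k) * falling_fact (real m) k))"
    unfolding atMost_atLeast0 occ_def \<phi>_def[symmetric]
  proof (rule sum.cong)
    fix k assume "k \<in> {0..x}"
    then show "spillage (x - k) n k \<phi> * (\<theta> ^ n / real m ^ n * falling_fact (real m) k * ncStirling n k \<phi>)
        = c * (real (Stirling x k) * falling_fact (real m) k)"
      using spillage_mult_ncStirling[OF \<open>0 \<le> \<phi>\<close> _ assms(5), of k]
      by (simp add: c_def algebra_simps)
  qed simp
  also have "\<dots> = c * real m ^ x"
    by (simp add: sum_distrib_left[symmetric] power_eq_sum_Stirling_falling_fact)
  also have "\<dots> = real (n choose x) * (\<phi> ^ (n - x) * (\<theta> ^ n / real m ^ n) * real m ^ x)"
    unfolding c_def by (simp only: mult.assoc)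
  also have "\<dots> = real (n choose x) * (\<theta> ^ x * (1 - \<theta>) ^ (n - x))"
    unfolding \<phi>_def by (subst binomial_weight_eq) (use assms in auto)
  finally show ?thesis by (simp add: \<phi>_def)
qed

end
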